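(* For every $d\ge 2$, $\dfrac{1}{6d-7}\le p_c^{\operatorname{face}}(d)$.
   Context: A face is a $(d-1)$-dimensional elementary cube in $\mathbb{R}^d$, i.e. a product $I_1\times\cdots\times I_d$ of intervals $[l,l]$ or $[l,l+1]$ ($l\in\mathbb{Z}$) with exactly one degenerate factor. Two faces $Q,Q'$ are adjacent if $Q\cap Q'$ is a $(d-2)$-dimensional elementary cube. In face percolation with parameter $p$, each face is open independently with probability $p$ (product measure $P_p$). $C(Q)$ is the set of open faces connected to $Q$ by chains of successively adjacent open faces, $|C(Q)|$ its cardinality, $Q_0=[0,0]\times[0,1]^{d-1}$, $\theta^{\operatorname{face}}(p)=P_p(|C(Q_0)|=\infty)$, and $p_c^{\operatorname{face}}(d)=\inf\{p:\theta^{\operatorname{face}}(p)>0\}$. *)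

theory Defs
  imports "HOL-Probability.Probability"
begin

text \<open>Points of R^d are represented as functions nat => real whose coordinates
  at indices >= d vanish.\<close>

definition elem_cube :: "nat \<Rightarrow> (nat \<Rightarrow> int) \<Rightarrow> nat set \<Rightarrow> (nat \<Rightarrow> real) set" where
  "elem_cube d l S = {x. (\<forall>j<d. if j \<in> S then real_of_int (l j) \<le> x j \<and> x j \<le> real_of_int (l j) + 1
                                   else x j = real_of_int (l j)) \<and> (\<forall>j\<ge>d. x j = 0)}"

definition elem_cubes :: "nat \<Rightarrow> nat \<Rightarrow> (nat \<Rightarrow> real) set set" where
  "elem_cubes d k = {elem_cube d l S | l S. S \<subseteq> {..<d} \<and> card S = k}"

definition faces :: "nat \<Rightarrow> (nat \<Rightarrow> real) set set" where
  "faces d = elem_cubes d (d - 1)"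

definition face_adjacent :: "nat \<Rightarrow> (nat \<Rightarrow> real) set \<Rightarrow> (nat \<Rightarrow> real) set \<Rightarrow> bool" where
  "face_adjacent d Q Q' \<longleftrightarrow> Q \<in> faces d \<and> Q' \<in> faces d \<and> Q \<inter> Q' \<in> elem_cubes d (d - 2)"

text \<open>Open cluster of Q in configuration w (w Q = True means Q is open).\<close>
definition cluster :: "nat \<Rightarrow> ((nat \<Rightarrow> real) set \<Rightarrow> bool) \<Rightarrow> (nat \<Rightarrow> real) set \<Rightarrow> (nat \<Rightarrow> real) set set" where
  "cluster d w Q = {Q'. w Q \<and> (\<lambda>A B. face_adjacent d A B \<and> w A \<and> w B)\<^sup>*\<^sup>* Q Q'}"

definition Q0 :: "nat \<Rightarrow> (nat \<Rightarrow> real) set" where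
  "Q0 d = elem_cube d (\<lambda>_. 0) ({..<d} - {0})"

definition face_measure :: "nat \<Rightarrow> real \<Rightarrow> ((nat \<Rightarrow> real) set \<Rightarrow> bool) measure" where
  "face_measure d p = (\<Pi>\<^sub>M Q\<in>faces d. measure_pmf (bernoulli_pmf p))"

definition theta_face :: "nat \<Rightarrow> real \<Rightarrow> real" where
  "theta_face d p = measure (face_measure d p)
      {w \<in> space (face_measure d p). infinite (cluster d w (Q0 d))}"

definition pc_face :: "nat \<Rightarrow> real" where
  "pc_face d = Inf {p \<in> {0..1}. theta_face d p > 0}"

end

theory Submission
  imports Defs "HOL-Library.Transitive_Closure_Table"
begin

text \<open>
  An infinite open cluster of \<open>Q\<^sub>0\<close> contains open self-avoiding walks of every length starting
  at \<open>Q\<^sub>0\<close>, and a fixed walk with \<open>n + 1\<close> faces is open with probability \<open>p\<^sup>n\<^sup>+\<^sup>1\<close>.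
  Every face has at most \<open>6(d - 1)\<close> adjacent faces: \<open>2(d - 1)\<close> translates in the hyperplane
  of the face and \<open>4(d - 1)\<close> perpendicular ones sharing a \<open>(d - 2)\<close>-dimensional side. Hence
  there are at most \<open>(6d - 6)(6d - 7)\<^sup>n\<close> self-avoiding walks of \<open>n + 1\<close> steps, and
  \<open>\<theta>(p) \<le> (6d - 6) p\<^sup>2 (p (6d - 7))\<^sup>n\<close> for every \<open>n\<close>, which forces \<open>\<theta>(p) = 0\<close> whenever
  \<open>p (6d - 7) < 1\<close>. Since \<open>\<theta>(1) = 1\<close>, the critical value is at least \<open>1 / (6d - 7)\<close>.
\<close>

section \<open>Self-avoiding walks\<close>

definition self_avoiding_walks :: "('a \<Rightarrow> 'a \<Rightarrow> bool) \<Rightarrow> 'a \<Rightarrow> nat \<Rightarrow> 'a list set" where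
  "self_avoiding_walks R v n =
     {xs. hd xs = v \<and> successively R xs \<and> distinct xs \<and> length xs = Suc n}"

definition open_cluster :: "('a \<Rightarrow> 'a \<Rightarrow> bool) \<Rightarrow> ('a \<Rightarrow> bool) \<Rightarrow> 'a \<Rightarrow> 'a set" where
  "open_cluster R w v = {y. w v \<and> (\<lambda>a b. R a b \<and> w a \<and> w b)\<^sup>*\<^sup>* v y}"

lemma successively_take: "successively P xs \<Longrightarrow> successively P (take n xs)"
  by (metis append_take_drop_id successively_append_iff)

lemma successively_upt: "(\<And>k. P k (Suc k)) \<Longrightarrow> successively P [m..<n]"
proof (induction n)
  case (Suc n)
  show ?case
  proof (cases "m < n")
    case True
    then have "last [m..<n] = n - 1" "P (n - 1) n"
      using Suc.prems[of "n - 1"] by auto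
    with Suc True show ?thesis by (auto simp: successively_append_iff)
  qed simp
qed simp

lemma rtrancl_path_imp_successively:
  "rtrancl_path R x xs y \<Longrightarrow> successively R (x # xs) \<and> last (x # xs) = y"
  by (induction rule: rtrancl_path.induct) (auto simp: successively_Cons)

lemma successively_imp_rtranclp:
  "successively R xs \<Longrightarrow> y \<in> set xs \<Longrightarrow> R\<^sup>*\<^sup>* (hd xs) y"
  by (induction xs rule: induct_list012) (auto intro: converse_rtranclp_into_rtranclp)

lemma self_avoiding_walks_0: "self_avoiding_walks R v 0 = {[v]}"
  by (auto simp: self_avoiding_walks_def length_Suc_conv)

lemma self_avoiding_walks_Suc:
  "self_avoiding_walks R v (Suc n) =
     (\<lambda>(xs, y). xs @ [y]) ` (SIGMA xs:self_avoiding_walks R v n. {y. R (last xs) y} - set xs)"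
  (is "_ = ?extensions")
proof (intro set_eqI iffI)
  fix ys assume ys: "ys \<in> self_avoiding_walks R v (Suc n)"
  define xs y where "xs = butlast ys" and "y = last ys"
  have split: "ys = xs @ [y]" "xs \<noteq> []"
    using ys by (auto simp: self_avoiding_walks_def xs_def y_def simp flip: length_0_conv)
  with ys have "xs \<in> self_avoiding_walks R v n" "y \<in> {y. R (last xs) y} - set xs"
    by (auto simp: self_avoiding_walks_def successively_append_iff)
  with split(1) show "ys \<in> ?extensions"
    by (intro rev_image_eqI[of "(xs, y)"]) auto
next
  fix ys assume "ys \<in> ?extensions"
  then show "ys \<in> self_avoiding_walks R v (Suc n)"
    by (auto simp: self_avoiding_walks_def successively_append_iff hd_append)
qed

lemma take_in_self_avoiding_walks:
  "xs \<in> self_avoiding_walks R v m \<Longrightarrow> n \<le> m \<Longrightarrow> take (Suc n) xs \<in> self_avoiding_walks R v n"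
  by (auto simp: self_avoiding_walks_def successively_take)

lemma rtranclp_imp_self_avoiding_walk:
  assumes "R\<^sup>*\<^sup>* v y"
  obtains n xs where "xs \<in> self_avoiding_walks R v n" "last xs = y"
proof -
  obtain ys where "rtrancl_path R v ys y"
    using assms by (auto simp: rtranclp_eq_rtrancl_path)
  then obtain zs where zs: "rtrancl_path R v zs y" "distinct (v # zs)"
    by (rule rtrancl_path_distinct)
  show thesis
    using rtrancl_path_imp_successively[OF zs(1)] zs(2)
    by (intro that[of "v # zs" "length zs"]) (simp_all add: self_avoiding_walks_def)
qed

lemma self_avoiding_walk_rtranclp:
  "xs \<in> self_avoiding_walks R v n \<Longrightarrow> y \<in> set xs \<Longrightarrow> R\<^sup>*\<^sup>* v y"
  using successively_imp_rtranclp by (fastforce simp: self_avoiding_walks_def)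

lemma set_self_avoiding_walk_subset:
  assumes "\<And>x y. R x y \<Longrightarrow> y \<in> I" "v \<in> I" "xs \<in> self_avoiding_walks R v n"
  shows "set xs \<subseteq> I"
proof
  fix y assume "y \<in> set xs"
  with assms(3) have "R\<^sup>*\<^sup>* v y" by (rule self_avoiding_walk_rtranclp)
  then show "y \<in> I" by (cases rule: rtranclp.cases) (use assms(1,2) in auto)
qed

lemma infinite_rtranclp_iff:
  assumes "\<And>n. finite (self_avoiding_walks R v n)"
  shows "infinite {y. R\<^sup>*\<^sup>* v y} \<longleftrightarrow> (\<forall>n. self_avoiding_walks R v n \<noteq> {})"
proof
  assume inf: "infinite {y. R\<^sup>*\<^sup>* v y}"
  show "\<forall>n. self_avoiding_walks R v n \<noteq> {}"
  proof (intro allI notI)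
    fix n assume none: "self_avoiding_walks R v n = {}"
    have "{y. R\<^sup>*\<^sup>* v y} \<subseteq> last ` (\<Union>m<n. self_avoiding_walks R v m)"
    proof
      fix y assume "y \<in> {y. R\<^sup>*\<^sup>* v y}"
      then have "R\<^sup>*\<^sup>* v y" by simp
      then obtain m xs where xs: "xs \<in> self_avoiding_walks R v m" "last xs = y"
        by (rule rtranclp_imp_self_avoiding_walk)
      have "m < n"
      proof (rule ccontr)
        assume "\<not> m < n"
        then have "take (Suc n) xs \<in> self_avoiding_walks R v n"
          using take_in_self_avoiding_walks[OF xs(1)] by simp
        with none show False by simp
      qed
      with xs show "y \<in> last ` (\<Union>m<n. self_avoiding_walks R v m)" by auto
    qed
    moreover have "finite (last ` (\<Union>m<n. self_avoiding_walks R v m))"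
      using assms by simp
    ultimately have "finite {y. R\<^sup>*\<^sup>* v y}" by (rule finite_subset)
    with inf show False by simp
  qed
next
  assume walks: "\<forall>n. self_avoiding_walks R v n \<noteq> {}"
  show "infinite {y. R\<^sup>*\<^sup>* v y}"
  proof
    assume fin: "finite {y. R\<^sup>*\<^sup>* v y}"
    obtain xs where xs: "xs \<in> self_avoiding_walks R v (card {y. R\<^sup>*\<^sup>* v y})"
      using walks by blast
    then have "set xs \<subseteq> {y. R\<^sup>*\<^sup>* v y}" using self_avoiding_walk_rtranclp by fast
    with fin have "card (set xs) \<le> card {y. R\<^sup>*\<^sup>* v y}" by (rule card_mono)
    with xs show False by (simp add: self_avoiding_walks_def distinct_card)
  qed
qed

lemma open_self_avoiding_walks_iff:
  "xs \<in> self_avoiding_walks R v n \<and> (\<forall>x\<in>set xs. w x) \<longleftrightarrow>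
     w v \<and> xs \<in> self_avoiding_walks (\<lambda>a b. R a b \<and> w a \<and> w b) v n"
  (is "?lhs \<longleftrightarrow> _ \<and> xs \<in> self_avoiding_walks ?R v n")
proof
  assume ?lhs
  then have "successively ?R xs" "w v"
    by (auto simp: self_avoiding_walks_def length_Suc_conv elim!: successively_mono)
  with \<open>?lhs\<close> show "w v \<and> xs \<in> self_avoiding_walks ?R v n"
    by (simp add: self_avoiding_walks_def)
next
  assume open_walk: "w v \<and> xs \<in> self_avoiding_walks ?R v n"
  have "w y" if "y \<in> set xs" for y
    using self_avoiding_walk_rtranclp[OF conjunct2[OF open_walk] that] open_walk
    by (cases rule: rtranclp.cases) auto
  moreover have "successively R xs"
    using open_walk by (auto simp: self_avoiding_walks_def elim!: successively_mono)
  ultimately show ?lhs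
    using open_walk by (simp add: self_avoiding_walks_def)
qed

locale bounded_degree_graph =
  fixes R :: "'a \<Rightarrow> 'a \<Rightarrow> bool" and \<Delta> :: nat
  assumes sym: "R x y \<Longrightarrow> R y x"
    and finite_neighbours: "finite {y. R x y}"
    and card_neighbours_le: "card {y. R x y} \<le> \<Delta>"
begin

lemma card_walk_extensions_le:
  assumes "xs \<in> self_avoiding_walks R v (Suc n)"
  shows "card ({y. R (last xs) y} - set xs) \<le> \<Delta> - 1"
proof -
  obtain ys y where ys: "xs = ys @ [y]" "ys \<in> self_avoiding_walks R v n" "R (last ys) y"
    using assms unfolding self_avoiding_walks_Suc by force
  then have "ys \<noteq> []" by (auto simp: self_avoiding_walks_def)
  with ys have "last ys \<in> {y. R (last xs) y} \<inter> set xs"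
    using sym by auto
  then have "card ({y. R (last xs) y} - set xs) \<le> card ({y. R (last xs) y} - {last ys})"
    by (intro card_mono) (auto intro: finite_neighbours)
  also have "\<dots> \<le> \<Delta> - 1"
    using \<open>last ys \<in> _\<close> card_neighbours_le[of "last xs"] finite_neighbours[of "last xs"]
    by (simp add: card_Diff_singleton)
  finally show ?thesis .
qed

lemma finite_self_avoiding_walks: "finite (self_avoiding_walks R v n)"
  by (induction n) (auto simp: self_avoiding_walks_0 self_avoiding_walks_Suc finite_neighbours)

lemma card_self_avoiding_walks_Suc_le:
  "card (self_avoiding_walks R v (Suc n)) \<le>
     (\<Sum>xs\<in>self_avoiding_walks R v n. card ({y. R (last xs) y} - set xs))"
proof -
  have "card (self_avoiding_walks R v (Suc n)) \<le>
      card (SIGMA xs:self_avoiding_walks R v n. {y. R (last xs) y} - set xs)"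
    unfolding self_avoiding_walks_Suc
    by (intro card_image_le) (auto intro: finite_self_avoiding_walks finite_neighbours)
  also have "\<dots> = (\<Sum>xs\<in>self_avoiding_walks R v n. card ({y. R (last xs) y} - set xs))"
    by (intro card_SigmaI) (auto intro: finite_self_avoiding_walks finite_neighbours)
  finally show ?thesis .
qed

lemma card_self_avoiding_walks_le:
  "card (self_avoiding_walks R v (Suc n)) \<le> \<Delta> * (\<Delta> - 1) ^ n"
proof (induction n)
  case 0
  have "card (self_avoiding_walks R v 1) \<le> card ({y. R v y} - {v})"
    using card_self_avoiding_walks_Suc_le[of v 0] by (simp add: self_avoiding_walks_0)
  also have "\<dots> \<le> \<Delta>"
    using card_neighbours_le finite_neighbours by (meson card_Diff1_le le_trans)
  finally show ?case by simp
next
  case (Suc n)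
  have "card (self_avoiding_walks R v (Suc (Suc n))) \<le> (\<Sum>xs\<in>self_avoiding_walks R v (Suc n). \<Delta> - 1)"
    using card_self_avoiding_walks_Suc_le card_walk_extensions_le by (meson order_trans sum_mono)
  also have "\<dots> \<le> \<Delta> * (\<Delta> - 1) ^ n * (\<Delta> - 1)"
    using Suc.IH by simp
  finally show ?case by (simp add: mult_ac)
qed

lemma infinite_open_cluster_iff:
  "infinite (open_cluster R w v) \<longleftrightarrow> (\<forall>n. \<exists>xs\<in>self_avoiding_walks R v n. \<forall>x\<in>set xs. w x)"
proof (cases "w v")
  case True
  let ?R = "\<lambda>a b. R a b \<and> w a \<and> w b"
  have open_walks: "self_avoiding_walks ?R v n = {xs \<in> self_avoiding_walks R v n. \<forall>x\<in>set xs. w x}" for n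
    using open_self_avoiding_walks_iff[of _ R v n w] True by blast
  have "open_cluster R w v = {y. ?R\<^sup>*\<^sup>* v y}"
    using True by (simp add: open_cluster_def)
  also have "infinite \<dots> \<longleftrightarrow> (\<forall>n. self_avoiding_walks ?R v n \<noteq> {})"
    by (rule infinite_rtranclp_iff) (simp add: open_walks finite_self_avoiding_walks)
  finally show ?thesis
    unfolding open_walks by blast
next
  case False
  then have "open_cluster R w v = {}" by (simp add: open_cluster_def)
  moreover have "\<not> (\<exists>xs\<in>self_avoiding_walks R v 0. \<forall>x\<in>set xs. w x)"
    using False by (simp add: self_avoiding_walks_0)
  ultimately show ?thesis by auto
qed

end

section \<open>Bernoulli percolation on graphs of bounded degree\<close>

definition percolation_measure :: "'a set \<Rightarrow> real \<Rightarrow> ('a \<Rightarrow> bool) measure" where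
  "percolation_measure I p = (\<Pi>\<^sub>M i\<in>I. measure_pmf (bernoulli_pmf p))"

definition open_walk_event :: "('a \<Rightarrow> 'a \<Rightarrow> bool) \<Rightarrow> 'a \<Rightarrow> nat \<Rightarrow> ('a \<Rightarrow> bool) set" where
  "open_walk_event R v n = {w. \<exists>xs\<in>self_avoiding_walks R v n. \<forall>x\<in>set xs. w x}"

lemma prob_space_percolation_measure: "prob_space (percolation_measure I p)"
  unfolding percolation_measure_def by (rule prob_space_PiM) (rule prob_space_measure_pmf)

lemma all_open_eq_prod_emb:
  "{w \<in> space (percolation_measure I p). \<forall>i\<in>F. w i} =
     prod_emb I (\<lambda>_. measure_pmf (bernoulli_pmf p)) F (\<Pi>\<^sub>E i\<in>F. {True})"
  unfolding percolation_measure_def prod_emb_def space_PiM space_measure_pmf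
  by (auto simp: restrict_def fun_eq_iff)

lemma sets_all_open:
  assumes "F \<subseteq> I" "finite F"
  shows "{w \<in> space (percolation_measure I p). \<forall>i\<in>F. w i} \<in> sets (percolation_measure I p)"
  unfolding all_open_eq_prod_emb unfolding percolation_measure_def
  by (rule measurable_prod_emb[OF assms(1)]) (rule sets_PiM_I_finite[OF assms(2)], simp)

lemma measure_all_open:
  assumes "F \<subseteq> I" "finite F" "0 \<le> p" "p \<le> 1"
  shows "measure (percolation_measure I p) {w \<in> space (percolation_measure I p). \<forall>i\<in>F. w i} = p ^ card F"
proof -
  interpret product_prob_space "\<lambda>_. measure_pmf (bernoulli_pmf p)" I
    by (rule product_prob_spaceI) (rule prob_space_measure_pmf)
  have "measure (percolation_measure I p) {w \<in> space (percolation_measure I p). \<forall>i\<in>F. w i} =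
      (\<Prod>i\<in>F. measure (measure_pmf (bernoulli_pmf p)) {True})"
    unfolding all_open_eq_prod_emb unfolding percolation_measure_def
    by (rule measure_PiM_emb[OF assms(1,2)]) simp
  also have "\<dots> = p ^ card F"
    using assms(3,4) by (simp add: measure_pmf_single)
  finally show ?thesis .
qed

lemma space_Int_open_walk_event:
  "space (percolation_measure I p) \<inter> open_walk_event R v n =
     (\<Union>xs\<in>self_avoiding_walks R v n. {w \<in> space (percolation_measure I p). \<forall>i\<in>set xs. w i})"
  by (auto simp: open_walk_event_def)

context bounded_degree_graph
begin

lemma sets_all_open_walk:
  assumes "\<And>x y. R x y \<Longrightarrow> y \<in> I" "v \<in> I" "xs \<in> self_avoiding_walks R v n"
  shows "{w \<in> space (percolation_measure I p). \<forall>i\<in>set xs. w i} \<in> sets (percolation_measure I p)"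
  using set_self_avoiding_walk_subset[of R I, OF assms] by (simp add: sets_all_open)

lemma sets_open_walk_event:
  assumes "\<And>x y. R x y \<Longrightarrow> y \<in> I" "v \<in> I"
  shows "space (percolation_measure I p) \<inter> open_walk_event R v n \<in> sets (percolation_measure I p)"
  unfolding space_Int_open_walk_event
  using finite_self_avoiding_walks sets_all_open_walk[of I, OF assms] by (intro sets.finite_UN) auto

lemma measure_open_walk_event_le:
  fixes p :: real
  assumes "\<And>x y. R x y \<Longrightarrow> y \<in> I" "v \<in> I" "0 \<le> p" "p \<le> 1"
  shows "measure (percolation_measure I p) (space (percolation_measure I p) \<inter> open_walk_event R v n)
           \<le> real (card (self_avoiding_walks R v n)) * p ^ Suc n"
proof -
  let ?M = "percolation_measure I p"
  have "measure ?M (space ?M \<inter> open_walk_event R v n) \<le>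
      (\<Sum>xs\<in>self_avoiding_walks R v n. measure ?M {w \<in> space ?M. \<forall>i\<in>set xs. w i})"
    unfolding space_Int_open_walk_event
    using finite_self_avoiding_walks sets_all_open_walk[of I, OF assms(1,2)]
    by (intro measure_UNION_le) auto
  also have "\<dots> = (\<Sum>xs\<in>self_avoiding_walks R v n. p ^ Suc n)"
  proof (rule sum.cong)
    fix xs assume xs: "xs \<in> self_avoiding_walks R v n"
    then have "card (set xs) = Suc n"
      by (simp add: self_avoiding_walks_def distinct_card)
    with measure_all_open[OF set_self_avoiding_walk_subset[of R I, OF assms(1,2) xs] _ assms(3,4)]
    show "measure ?M {w \<in> space ?M. \<forall>i\<in>set xs. w i} = p ^ Suc n" by simp
  qed simp
  finally show ?thesis by simp
qed

lemma infinite_open_cluster_event: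
  "{w \<in> space M. infinite (open_cluster R w v)} = {w \<in> space M. \<forall>n. w \<in> open_walk_event R v n}"
  by (simp add: infinite_open_cluster_iff open_walk_event_def)

theorem percolation_probability_eq_0:
  fixes p :: real
  assumes "\<And>x y. R x y \<Longrightarrow> y \<in> I" "v \<in> I" "0 \<le> p" "p \<le> 1" "p * (\<Delta> - 1) < 1"
  shows "measure (percolation_measure I p)
           {w \<in> space (percolation_measure I p). infinite (open_cluster R w v)} = 0"
proof -
  let ?M = "percolation_measure I p"
  let ?\<theta> = "measure ?M {w \<in> space ?M. infinite (open_cluster R w v)}"
  interpret prob_space ?M by (rule prob_space_percolation_measure)
  have "?\<theta> \<le> \<Delta> * p\<^sup>2 * (p * (\<Delta> - 1)) ^ n" for n
  proof -
    have "?\<theta> \<le> measure ?M (space ?M \<inter> open_walk_event R v (Suc n))"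
      unfolding infinite_open_cluster_event
      by (intro finite_measure_mono sets_open_walk_event assms(1,2)) auto
    also have "\<dots> \<le> real (card (self_avoiding_walks R v (Suc n))) * p ^ Suc (Suc n)"
      by (rule measure_open_walk_event_le) (use assms in auto)
    also have "\<dots> \<le> real (\<Delta> * (\<Delta> - 1) ^ n) * p ^ Suc (Suc n)"
      using card_self_avoiding_walks_le[of v n] assms(3)
      by (intro mult_right_mono) (simp_all only: of_nat_le_iff, simp)
    also have "\<dots> = \<Delta> * p\<^sup>2 * (p * (\<Delta> - 1)) ^ n"
      by (simp add: power_mult_distrib power2_eq_square)
    finally show ?thesis .
  qed
  moreover have "(\<lambda>n. \<Delta> * p\<^sup>2 * (p * (\<Delta> - 1)) ^ n) \<longlonglongrightarrow> 0"
    using assms(3,5) by (intro tendsto_mult_right_zero LIMSEQ_power_zero) simp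
  ultimately have "?\<theta> \<le> 0"
    by (intro LIMSEQ_le_const) auto
  then show ?thesis by (simp add: measure_le_0_iff)
qed

theorem percolation_probability_at_1:
  assumes "\<And>x y. R x y \<Longrightarrow> y \<in> I" "v \<in> I" "\<And>n. self_avoiding_walks R v n \<noteq> {}"
  shows "measure (percolation_measure I 1)
           {w \<in> space (percolation_measure I 1). infinite (open_cluster R w v)} = 1"
proof -
  let ?M = "percolation_measure I 1"
  interpret prob_space ?M by (rule prob_space_percolation_measure)
  have event: "space ?M \<inter> open_walk_event R v n \<in> sets ?M" for n
    by (rule sets_open_walk_event) (use assms in auto)
  have "prob (space ?M \<inter> open_walk_event R v n) = 1" for n
  proof -
    obtain xs where xs: "xs \<in> self_avoiding_walks R v n"
      using assms(3) by blast
    have "1 = prob {w \<in> space ?M. \<forall>i\<in>set xs. w i}"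
      using measure_all_open[OF set_self_avoiding_walk_subset[of R I, OF assms(1,2) xs]] by simp
    also have "\<dots> \<le> prob (space ?M \<inter> open_walk_event R v n)"
      using xs by (intro finite_measure_mono event) (auto simp: open_walk_event_def)
    finally show ?thesis by (simp add: antisym)
  qed
  then have "AE w in ?M. w \<in> open_walk_event R v n" for n
    using prob_eq_1[OF event] by auto
  then have "AE w in ?M. \<forall>n. w \<in> open_walk_event R v n"
    by (simp add: AE_all_countable)
  moreover have "{w \<in> space ?M. \<forall>n. w \<in> open_walk_event R v n} \<in> sets ?M"
    using event by (intro sets.sets_Collect_countable_All) (simp add: Int_def conj_commute)
  ultimately show ?thesis
    unfolding infinite_open_cluster_event by (simp add: prob_Collect_eq_1)
qed

end

section \<open>Adjacent faces of the cubical lattice\<close>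

abbreviation face_at :: "nat \<Rightarrow> (nat \<Rightarrow> int) \<Rightarrow> nat \<Rightarrow> (nat \<Rightarrow> real) set" where
  "face_at d l i \<equiv> elem_cube d l ({..<d} - {i})"

lemma mem_elem_cube:
  "x \<in> elem_cube d l S \<longleftrightarrow>
     (\<forall>j<d. if j \<in> S then real_of_int (l j) \<le> x j \<and> x j \<le> real_of_int (l j) + 1
            else x j = real_of_int (l j)) \<and> (\<forall>j\<ge>d. x j = 0)"
  by (simp add: elem_cube_def)

lemma elem_cube_cong: "(\<And>j. j < d \<Longrightarrow> l j = l' j) \<Longrightarrow> elem_cube d l S = elem_cube d l' S"
  by (simp add: elem_cube_def)

definition cube_corner :: "nat \<Rightarrow> (nat \<Rightarrow> int) \<Rightarrow> nat \<Rightarrow> real" where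
  "cube_corner d l j = (if j < d then real_of_int (l j) else 0)"

lemma cube_corner_mem: "cube_corner d l \<in> elem_cube d l S"
  by (auto simp: mem_elem_cube cube_corner_def)

lemma elem_cube_fixed_coord: "x \<in> elem_cube d l S \<Longrightarrow> j \<notin> S \<inter> {..<d} \<Longrightarrow> x j = cube_corner d l j"
  by (auto simp: mem_elem_cube cube_corner_def)

lemma elem_cube_eqD:
  assumes "elem_cube d l S = elem_cube d l' S" "j < d"
  shows "l j = l' j"
proof -
  have "cube_corner d l \<in> elem_cube d l' S" "cube_corner d l' \<in> elem_cube d l S"
    using cube_corner_mem assms(1) by blast+
  with assms(2) have "real_of_int (l j) = real_of_int (l' j)"
    unfolding mem_elem_cube cube_corner_def by (cases "j \<in> S") force+
  then show ?thesis by simp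
qed

lemma unit_intervals_Int_subsingleton:
  fixes a b :: int and u v :: real
  assumes "a \<noteq> b" "u \<in> {a..a + 1} \<inter> {b..b + 1}" "v \<in> {a..a + 1} \<inter> {b..b + 1}"
  shows "u = v"
proof -
  have "real_of_int a + 1 \<le> b \<or> real_of_int b + 1 \<le> a"
    using assms(1) by (metis linorder_neqE_linordered_idom of_int_add of_int_le_iff of_int_1 zless_imp_add1_zle)
  with assms(2,3) show ?thesis by auto
qed

definition nonconstant_coord :: "(nat \<Rightarrow> real) set \<Rightarrow> nat \<Rightarrow> bool" where
  "nonconstant_coord A j \<longleftrightarrow> (\<exists>x\<in>A. \<exists>y\<in>A. x j \<noteq> y j)"

lemma nonconstant_coord_elem_cube_Int:
  assumes x: "x \<in> elem_cube d l S \<inter> elem_cube d l' S'"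
  shows "nonconstant_coord (elem_cube d l S \<inter> elem_cube d l' S') j \<longleftrightarrow>
           j < d \<and> j \<in> S \<and> j \<in> S' \<and> l j = l' j"
proof
  assume "nonconstant_coord (elem_cube d l S \<inter> elem_cube d l' S') j"
  then obtain u v where u: "u \<in> elem_cube d l S" "u \<in> elem_cube d l' S'"
    and v: "v \<in> elem_cube d l S" "v \<in> elem_cube d l' S'" and uv: "u j \<noteq> v j"
    by (auto simp: nonconstant_coord_def)
  have j: "j \<in> S \<inter> {..<d}" "j \<in> S' \<inter> {..<d}"
    using elem_cube_fixed_coord[OF u(1)] elem_cube_fixed_coord[OF v(1)]
      elem_cube_fixed_coord[OF u(2)] elem_cube_fixed_coord[OF v(2)] uv by metis+
  with u v have "u j \<in> {l j..l j + 1} \<inter> {l' j..l' j + 1}" "v j \<in> {l j..l j + 1} \<inter> {l' j..l' j + 1}"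
    by (auto simp: mem_elem_cube)
  with uv have "l j = l' j" using unit_intervals_Int_subsingleton by blast
  with j show "j < d \<and> j \<in> S \<and> j \<in> S' \<and> l j = l' j" by blast
next
  assume j: "j < d \<and> j \<in> S \<and> j \<in> S' \<and> l j = l' j"
  let ?u = "x(j := real_of_int (l j))" and ?v = "x(j := real_of_int (l j) + 1)"
  have "?u \<in> elem_cube d l S \<inter> elem_cube d l' S'" "?v \<in> elem_cube d l S \<inter> elem_cube d l' S'"
    using x j by (auto simp: mem_elem_cube)
  then show "nonconstant_coord (elem_cube d l S \<inter> elem_cube d l' S') j"
    unfolding nonconstant_coord_def by (metis fun_upd_same add_cancel_left_right one_neq_zero)
qed

lemma nonconstant_coord_elem_cube: "nonconstant_coord (elem_cube d l S) j \<longleftrightarrow> j < d \<and> j \<in> S"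
  using nonconstant_coord_elem_cube_Int[of "cube_corner d l" d l S l S j] cube_corner_mem[of d l S]
  by simp

lemma face_at_in_faces: "i < d \<Longrightarrow> face_at d l i \<in> faces d"
  unfolding faces_def elem_cubes_def by (auto intro!: exI[of _ l])

lemma Q0_in_faces: "d \<ge> 1 \<Longrightarrow> Q0 d \<in> faces d"
  unfolding Q0_def by (rule face_at_in_faces) simp

lemma facesE:
  assumes "Q \<in> faces d" "d \<ge> 1"
  obtains l i where "i < d" "Q = face_at d l i"
proof -
  obtain l S where Q: "Q = elem_cube d l S" "S \<subseteq> {..<d}" "card S = d - 1"
    using assms(1) by (auto simp: faces_def elem_cubes_def)
  have "card ({..<d} - S) = 1"
    using Q assms(2) by (simp add: card_Diff_subset finite_subset)
  then obtain i where i: "{..<d} - S = {i}" by (auto simp: card_Suc_eq)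
  then have "S = {..<d} - {i}" "i < d" using Q(2) by auto
  with Q show thesis using that by blast
qed

lemma face_adjacent_face_atE:
  assumes "face_adjacent d (face_at d l i) (face_at d l' i')"
  obtains x where "x \<in> face_at d l i" "x \<in> face_at d l' i'"
    "card {j. j < d \<and> j \<noteq> i \<and> j \<noteq> i' \<and> l j = l' j} = d - 2"
proof -
  obtain m T where QQ: "face_at d l i \<inter> face_at d l' i' = elem_cube d m T"
    and T: "T \<subseteq> {..<d}" "card T = d - 2"
    using assms by (auto simp: face_adjacent_def elem_cubes_def)
  have x: "cube_corner d m \<in> face_at d l i \<inter> face_at d l' i'"
    unfolding QQ by (rule cube_corner_mem)
  have "j \<in> T \<longleftrightarrow> j < d \<and> j \<noteq> i \<and> j \<noteq> i' \<and> l j = l' j" for j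
  proof -
    have "j \<in> T \<longleftrightarrow> nonconstant_coord (elem_cube d m T) j"
      using T(1) by (auto simp: nonconstant_coord_elem_cube)
    also have "\<dots> \<longleftrightarrow> j < d \<and> j \<noteq> i \<and> j \<noteq> i' \<and> l j = l' j"
      unfolding QQ[symmetric] nonconstant_coord_elem_cube_Int[OF x] by auto
    finally show ?thesis .
  qed
  then have "T = {j. j < d \<and> j \<noteq> i \<and> j \<noteq> i' \<and> l j = l' j}" by blast
  with x T(2) show thesis by (intro that) auto
qed

(* The hypothesis d \<ge> 2 is needed: for d = 1 truncated subtraction gives d - 2 = d - 1,
   so every face is adjacent to itself. *)
lemma face_adjacent_parallelE:
  assumes adj: "face_adjacent d (face_at d l i) (face_at d l' i)" and "i < d" "d \<ge> 2"
  obtains j s where "j < d" "j \<noteq> i" "s \<in> {-1, 1}" "face_at d l' i = face_at d (l(j := l j + s)) i"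
proof -
  obtain x where x: "x \<in> face_at d l i" "x \<in> face_at d l' i"
    and agree: "card {j. j < d \<and> j \<noteq> i \<and> j \<noteq> i \<and> l j = l' j} = d - 2"
    using adj by (rule face_adjacent_face_atE)
  let ?D = "{j. j < d \<and> j \<noteq> i \<and> l j \<noteq> l' j}"
  have "?D = ({..<d} - {i}) - {j. j < d \<and> j \<noteq> i \<and> j \<noteq> i \<and> l j = l' j}" by auto
  then have "card ?D = (d - 1) - (d - 2)"
    using agree \<open>i < d\<close> by (simp add: card_Diff_subset finite_subset subset_iff)
  also have "\<dots> = 1" using \<open>d \<ge> 2\<close> by simp
  finally obtain j where "?D = {j}" by (auto simp: card_Suc_eq)
  then have D: "k < d \<and> k \<noteq> i \<and> l k \<noteq> l' k \<longleftrightarrow> k = j" for k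
    by (simp add: set_eq_iff)
  then have j: "j < d" "j \<noteq> i" "l j \<noteq> l' j" by blast+
  have "x i = l i" "x i = l' i"
    using x \<open>i < d\<close> by (auto simp: mem_elem_cube)
  then have li: "l i = l' i" by simp
  have "l j \<le> x j" "x j \<le> l j + 1" "l' j \<le> x j" "x j \<le> l' j + 1"
    using x j by (auto simp: mem_elem_cube)
  then have "real_of_int (l' j) \<le> l j + 1" "real_of_int (l j) \<le> l' j + 1" by linarith+
  then have "l' j \<le> l j + 1" "l j \<le> l' j + 1" by linarith+
  with j(3) have "l' j - l j \<in> {-1, 1}" unfolding insert_iff empty_iff by presburger
  moreover have "face_at d l' i = face_at d (l(j := l j + (l' j - l j))) i"
  proof (rule elem_cube_cong)
    fix k assume "k < d"
    then show "l' k = (l(j := l j + (l' j - l j))) k"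
      using D[of k] li by (cases "k = j"; cases "k = i") auto
  qed
  ultimately show thesis by (rule that[OF j(1,2)])
qed

lemma face_adjacent_perpendicularE:
  assumes adj: "face_adjacent d (face_at d l i) (face_at d l' i')" and "i < d" "i' < d" "i \<noteq> i'"
  obtains a b where "a \<in> {0, 1}" "b \<in> {0, 1}"
    "face_at d l' i' = face_at d (l(i := l i - a, i' := l i' + b)) i'"
proof -
  obtain x where x: "x \<in> face_at d l i" "x \<in> face_at d l' i'"
    and agree: "card {j. j < d \<and> j \<noteq> i \<and> j \<noteq> i' \<and> l j = l' j} = d - 2"
    using adj by (rule face_adjacent_face_atE)
  have "{j. j < d \<and> j \<noteq> i \<and> j \<noteq> i' \<and> l j = l' j} \<subseteq> {..<d} - {i, i'}" by auto
  moreover have "card ({..<d} - {i, i'}) = d - 2"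
    using assms(2-4) by (subst card_Diff_subset) auto
  ultimately have "{j. j < d \<and> j \<noteq> i \<and> j \<noteq> i' \<and> l j = l' j} = {..<d} - {i, i'}"
    using agree by (intro card_subset_eq) auto
  then have others: "l j = l' j" if "j < d" "j \<noteq> i" "j \<noteq> i'" for j
    using that by blast
  have "x i = l i" "l' i \<le> x i" "x i \<le> l' i + 1"
    using x assms(2-4) by (auto simp: mem_elem_cube)
  then have "l' i \<le> l i" "l i \<le> l' i + 1" by linarith+
  then have "l i - l' i \<in> {0, 1}" unfolding insert_iff empty_iff by presburger
  moreover have "x i' = l' i'" "l i' \<le> x i'" "x i' \<le> l i' + 1"
    using x assms(2-4) by (auto simp: mem_elem_cube)
  then have "l i' \<le> l' i'" "l' i' \<le> l i' + 1" by linarith+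
  then have "l' i' - l i' \<in> {0, 1}" unfolding insert_iff empty_iff by presburger
  moreover have "face_at d l' i' = face_at d (l(i := l i - (l i - l' i), i' := l i' + (l' i' - l i'))) i'"
    using others by (intro elem_cube_cong) simp
  ultimately show thesis by (rule that)
qed

lemma face_neighbours_subset:
  assumes "d \<ge> 2" "i < d"
  shows "{Q. face_adjacent d (face_at d l i) Q} \<subseteq>
           (\<lambda>(j, s). face_at d (l(j := l j + s)) i) ` (({..<d} - {i}) \<times> {-1, 1}) \<union>
           (\<lambda>(j, a, b). face_at d (l(i := l i - a, j := l j + b)) j) ` (({..<d} - {i}) \<times> {0, 1} \<times> {0, 1})"
    (is "_ \<subseteq> ?parallel \<union> ?perpendicular")
proof
  fix Q assume "Q \<in> {Q. face_adjacent d (face_at d l i) Q}"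
  then have adj: "face_adjacent d (face_at d l i) Q" by simp
  then have "Q \<in> faces d" by (simp add: face_adjacent_def)
  then obtain l' i' where i': "i' < d" and Q: "Q = face_at d l' i'"
    using assms(1) by (elim facesE) auto
  show "Q \<in> ?parallel \<union> ?perpendicular"
  proof (cases "i' = i")
    case True
    then obtain j s where "j < d" "j \<noteq> i" "s \<in> {-1, 1}" "Q = face_at d (l(j := l j + s)) i"
      using adj assms unfolding Q True by (elim face_adjacent_parallelE) auto
    then have "Q \<in> ?parallel" by (intro rev_image_eqI[of "(j, s)"]) auto
    then show ?thesis ..
  next
    case False
    then obtain a b where "a \<in> {0, 1}" "b \<in> {0, 1}" "Q = face_at d (l(i := l i - a, i' := l i' + b)) i'"
      using adj assms i' unfolding Q by (elim face_adjacent_perpendicularE) auto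
    then have "Q \<in> ?perpendicular" using i' False by (intro rev_image_eqI[of "(i', a, b)"]) auto
    then show ?thesis ..
  qed
qed

lemma face_neighbours_bounded:
  assumes "d \<ge> 2"
  shows "finite {Q'. face_adjacent d Q Q'}" "card {Q'. face_adjacent d Q Q'} \<le> 6 * d - 6"
proof -
  have "finite {Q'. face_adjacent d Q Q'} \<and> card {Q'. face_adjacent d Q Q'} \<le> 6 * d - 6"
  proof (cases "Q \<in> faces d")
    case True
    then obtain l i where i: "i < d" and Q: "Q = face_at d l i"
      using assms by (elim facesE) auto
    let ?parallel = "(\<lambda>(j, s). face_at d (l(j := l j + s)) i) ` (({..<d} - {i}) \<times> {-1, 1::int})"
    let ?perpendicular = "(\<lambda>(j, a, b). face_at d (l(i := l i - a, j := l j + b)) j) `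
      (({..<d} - {i}) \<times> {0, 1::int} \<times> {0, 1::int})"
    have dirs: "card ({..<d} - {i}) = d - 1" using i by simp
    have "card ?parallel \<le> card (({..<d} - {i}) \<times> {-1, 1::int})"
      by (rule card_image_le) simp
    also have "\<dots> = (d - 1) * 2"
      using dirs by (simp add: card_cartesian_product)
    finally have "card ?parallel \<le> (d - 1) * 2" .
    have "card ?perpendicular \<le> card (({..<d} - {i}) \<times> {0, 1::int} \<times> {0, 1::int})"
      by (rule card_image_le) simp
    also have "\<dots> = (d - 1) * 4"
      using dirs by (simp add: card_cartesian_product)
    finally have "card ?perpendicular \<le> (d - 1) * 4" .
    with \<open>card ?parallel \<le> (d - 1) * 2\<close>
    have "card (?parallel \<union> ?perpendicular) \<le> 6 * d - 6"
      using card_Un_le[of ?parallel ?perpendicular] by linarith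
    moreover have "finite (?parallel \<union> ?perpendicular)" by simp
    ultimately show ?thesis
      using face_neighbours_subset[OF assms i, of l] unfolding Q by (meson card_mono finite_subset le_trans)
  next
    case False
    then show ?thesis by (simp add: face_adjacent_def)
  qed
  then show "finite {Q'. face_adjacent d Q Q'}" "card {Q'. face_adjacent d Q Q'} \<le> 6 * d - 6"
    by auto
qed

lemma bounded_degree_graph_faces:
  assumes "d \<ge> 2"
  shows "bounded_degree_graph (face_adjacent d) (6 * d - 6)"
  using face_neighbours_bounded[OF assms] by unfold_locales (auto simp: face_adjacent_def Int_commute)

lemma face_adjacent_shift:
  assumes "i < d" "j < d" "i \<noteq> j"
  shows "face_adjacent d (face_at d l i) (face_at d (l(j := l j + 1)) i)"
proof -
  let ?l' = "l(j := l j + 1)"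
  have pointwise:
    "((if k \<in> {..<d} - {i} then real_of_int (l k) \<le> x k \<and> x k \<le> real_of_int (l k) + 1
       else x k = real_of_int (l k)) \<and>
      (if k \<in> {..<d} - {i} then real_of_int (?l' k) \<le> x k \<and> x k \<le> real_of_int (?l' k) + 1
       else x k = real_of_int (?l' k))) \<longleftrightarrow>
     (if k \<in> {..<d} - {i, j} then real_of_int (?l' k) \<le> x k \<and> x k \<le> real_of_int (?l' k) + 1
      else x k = real_of_int (?l' k))" if "k < d" for k x
    using that assms by (cases "k = i"; cases "k = j") auto
  have "face_at d l i \<inter> face_at d ?l' i = elem_cube d ?l' ({..<d} - {i, j})"
    unfolding set_eq_iff Int_iff mem_elem_cube using pointwise by blast
  moreover have "card ({..<d} - {i, j}) = d - 2"
    using assms by (subst card_Diff_subset) auto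
  ultimately have "face_at d l i \<inter> face_at d ?l' i \<in> elem_cubes d (d - 2)"
    unfolding elem_cubes_def by blast
  then show ?thesis
    using assms by (simp add: face_adjacent_def face_at_in_faces)
qed

definition face_column :: "nat \<Rightarrow> nat \<Rightarrow> (nat \<Rightarrow> real) set" where
  "face_column d k = face_at d ((\<lambda>_. 0)(1 := int k)) 0"

lemma face_column_0: "face_column d 0 = Q0 d"
  by (simp add: face_column_def Q0_def fun_upd_idem)

lemma face_adjacent_face_column:
  "d \<ge> 2 \<Longrightarrow> face_adjacent d (face_column d k) (face_column d (Suc k))"
  using face_adjacent_shift[of 0 d 1 "(\<lambda>_. 0)(1 := int k)"] by (simp add: face_column_def add.commute)

lemma inj_face_column:
  assumes "d \<ge> 2"
  shows "inj (face_column d)"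
proof (rule injI)
  fix a b assume "face_column d a = face_column d b"
  from elem_cube_eqD[OF this[unfolded face_column_def], of 1] assms
  show "a = b" by simp
qed

lemma face_column_self_avoiding_walk:
  assumes "d \<ge> 2"
  shows "map (face_column d) [0..<Suc n] \<in> self_avoiding_walks (face_adjacent d) (Q0 d) n"
proof -
  have "hd (map (face_column d) [0..<Suc n]) = Q0 d"
    by (simp add: hd_map face_column_0 del: upt_Suc)
  moreover have "successively (face_adjacent d) (map (face_column d) [0..<Suc n])"
    unfolding successively_map using face_adjacent_face_column[OF assms] by (rule successively_upt)
  moreover have "distinct (map (face_column d) [0..<Suc n])"
    using inj_face_column[OF assms] by (simp add: distinct_map inj_on_subset[OF _ subset_UNIV] del: upt_Suc)
  ultimately show ?thesis by (simp add: self_avoiding_walks_def del: upt_Suc)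
qed

section \<open>Face percolation\<close>

lemma theta_face_eq:
  "theta_face d p = measure (percolation_measure (faces d) p)
     {w \<in> space (percolation_measure (faces d) p). infinite (open_cluster (face_adjacent d) w (Q0 d))}"
  by (simp add: theta_face_def face_measure_def percolation_measure_def cluster_def open_cluster_def)

lemma theta_face_eq_0:
  assumes "d \<ge> 2" "0 \<le> p" "p \<le> 1" "p * (6 * real d - 7) < 1"
  shows "theta_face d p = 0"
proof -
  interpret bounded_degree_graph "face_adjacent d" "6 * d - 6"
    using assms(1) by (rule bounded_degree_graph_faces)
  have "real (6 * d - 6 - 1) = 6 * real d - 7" using assms(1) by simp
  then show ?thesis
    unfolding theta_face_eq using assms Q0_in_faces[of d]
    by (intro percolation_probability_eq_0) (auto simp: face_adjacent_def)
qed

lemma theta_face_1: "d \<ge> 2 \<Longrightarrow> theta_face d 1 = 1"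
  unfolding theta_face_eq
  using bounded_degree_graph_faces face_column_self_avoiding_walk Q0_in_faces[of d]
  by (intro bounded_degree_graph.percolation_probability_at_1) (auto simp: face_adjacent_def)

theorem proposition2p9:
  fixes d :: nat
  assumes "d \<ge> 2"
  shows "1 / (6 * real d - 7) \<le> pc_face d"
proof -
  have pos: "6 * real d - 7 > 0" using assms by simp
  have "1 \<in> {p \<in> {0..1}. theta_face d p > 0}"
    using theta_face_1[OF assms] by simp
  moreover have "1 / (6 * real d - 7) \<le> p" if "p \<in> {0..1}" "theta_face d p > 0" for p
  proof (rule ccontr)
    assume "\<not> 1 / (6 * real d - 7) \<le> p"
    then have "p * (6 * real d - 7) < 1" using pos by (simp add: field_simps)
    with assms that have "theta_face d p = 0" by (intro theta_face_eq_0) auto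
    with that show False by simp
  qed
  ultimately show ?thesis
    unfolding pc_face_def by (intro cInf_greatest) auto
qed

end
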